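(* Let $A=B^\top B+E$ where $B\in\mathbb{R}^{n\times d}$, $E\in\mathbb{R}^{d\times d}$ is symmetric with $\max_{i,j}|E_{ij}|\le a$, and $B^\top B$ has a $k$-sparse unit eigenvector $v$ corresponding to its largest eigenvalue $\lambda_1=\lambda_1(B^\top B)$. Let $\lambda_2=\lambda_2(B^\top B)$ be the second largest eigenvalue and assume $\lambda_1-\lambda_2>0$. Let $W^*$ be an optimal solution to $\max\,\mathrm{tr}(AW)$ s.t. $\mathrm{tr}(W)=1$, $\sum_{i,j}|W_{ij}|\le k$, $W\succeq0$. Then $$\|W^*-vv^\top\|_F\le\frac{2ak}{\lambda_1-\lambda_2}+\sqrt{\frac{2ak}{\lambda_1-\lambda_2}}.$$
   Context: A vector is $k$-sparse if it has at most $k$ nonzero entries; $\|\cdot\|_F$ is the Frobenius norm. *)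

theory Defs
  imports "HOL-Analysis.Analysis"
begin

definition is_eigenvalue :: "real^'d^'d \<Rightarrow> real \<Rightarrow> bool" where
  "is_eigenvalue M \<mu> \<longleftrightarrow> (\<exists>x. x \<noteq> 0 \<and> M *v x = \<mu> *\<^sub>R x)"

text \<open>Multiplicity of an eigenvalue (dimension of the eigenspace; for the symmetric
  matrices considered here it coincides with the algebraic multiplicity).\<close>
definition eig_mult :: "real^'d^'d \<Rightarrow> real \<Rightarrow> nat" where
  "eig_mult M \<mu> = dim {x. M *v x = \<mu> *\<^sub>R x}"

definition lambda1 :: "real^'d^'d \<Rightarrow> real" where
  "lambda1 M = Max {\<mu>. is_eigenvalue M \<mu>}"

text \<open>Second largest eigenvalue, counted with multiplicity.\<close>
definition lambda2 :: "real^'d^'d \<Rightarrow> real" where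
  "lambda2 M = (if eig_mult M (lambda1 M) \<ge> 2 then lambda1 M
               else Max {\<mu>. is_eigenvalue M \<mu> \<and> \<mu> < lambda1 M})"

definition symmetric_mat :: "real^'d^'d \<Rightarrow> bool" where
  "symmetric_mat M \<longleftrightarrow> transpose M = M"

definition psd :: "real^'d^'d \<Rightarrow> bool" where
  "psd W \<longleftrightarrow> symmetric_mat W \<and> (\<forall>x. 0 \<le> x \<bullet> (W *v x))"

definition k_sparse :: "nat \<Rightarrow> real^'d \<Rightarrow> bool" where
  "k_sparse k v \<longleftrightarrow> card {i. v $ i \<noteq> 0} \<le> k"

definition frob_norm :: "real^'m^'n \<Rightarrow> real" where
  "frob_norm M = sqrt (\<Sum>i\<in>UNIV. \<Sum>j\<in>UNIV. (M $ i $ j)\<^sup>2)"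

definition outer :: "real^'d \<Rightarrow> real^'d^'d" where
  "outer v = (\<chi> i j. v $ i * v $ j)"

definition sdp_feasible :: "nat \<Rightarrow> real^'d^'d \<Rightarrow> bool" where
  "sdp_feasible k W \<longleftrightarrow> trace W = 1 \<and> (\<Sum>i\<in>UNIV. \<Sum>j\<in>UNIV. \<bar>W $ i $ j\<bar>) \<le> real k \<and> psd W"

end

theory Submission
  imports Defs
begin

text \<open>Write \<open>\<Delta> = \<lambda>\<^sub>1 - \<lambda>\<^sub>2\<close> and \<open>f = \<parallel>W\<^sup>* - v v\<^sup>T\<parallel>\<^sub>F\<close>. Since \<open>v v\<^sup>T\<close> is itself feasible, optimality
  of \<open>W\<^sup>*\<close> gives \<open>tr (G (v v\<^sup>T - W\<^sup>*)) \<le> tr (E (W\<^sup>* - v v\<^sup>T))\<close> with \<open>G = B\<^sup>T B\<close>.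
  Expanding \<open>W\<^sup>*\<close> in an orthonormal eigenbasis and using that \<open>G\<close> is at most \<open>\<lambda>\<^sub>2\<close> on
  \<open>v\<^sup>\<perp>\<close>, the left side is at least \<open>\<Delta> (1 - v\<^sup>T W\<^sup>* v) \<ge> \<Delta> f\<^sup>2 / 2\<close>, the last step because
  \<open>\<parallel>W\<^sup>*\<parallel>\<^sub>F \<le> tr W\<^sup>* = 1\<close>. The right side is at most \<open>a\<close> times the entrywise l1 norm of
  \<open>W\<^sup>* - v v\<^sup>T\<close>, which is at most \<open>k f\<close> on the \<open>k \<times> k\<close> support block of \<open>v v\<^sup>T\<close> and at most
  \<open>k\<close> off it. Solving \<open>f\<^sup>2 \<le> (2 a k / \<Delta>) (1 + f)\<close> for \<open>f\<close> gives the bound.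

  The spectral theorem for real symmetric matrices is obtained variationally: a maximiser
  of the Rayleigh quotient on an invariant subspace is an eigenvector.\<close>

section \<open>Rayleigh quotients and the spectral theorem\<close>

lemma symmetric_mat_inner:
  assumes "symmetric_mat M"
  shows "(M *v x) \<bullet> y = x \<bullet> (M *v y)"
  by (metis assms dot_lmul_matrix symmetric_mat_def transpose_matrix_vector)

lemma linear_coeff_zero_if_quadratic_nonneg:
  fixes c d :: real
  assumes nonneg: "\<And>e. 0 \<le> 2 * e * c + e\<^sup>2 * d" and "0 \<le> d"
  shows "c = 0"
proof (rule ccontr)
  assume "c \<noteq> 0"
  define e where "e = - c / (d + 1)"
  have "e\<^sup>2 * d \<le> e\<^sup>2 * (d + 1)"
    by (simp add: distrib_left)
  also have "\<dots> = c\<^sup>2 / (d + 1)"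
    using \<open>0 \<le> d\<close> by (simp add: e_def power2_eq_square)
  finally have "2 * e * c + e\<^sup>2 * d \<le> - (c\<^sup>2 / (d + 1))"
    by (simp add: e_def power2_eq_square)
  also have "\<dots> < 0"
    using \<open>c \<noteq> 0\<close> \<open>0 \<le> d\<close> by simp
  finally show False
    using nonneg[of e] by simp
qed

lemma rayleigh_quotient_attains_max:
  fixes M :: "real^'n^'n"
  assumes "subspace S" and "S \<noteq> {0}"
  obtains x where "x \<in> S" "norm x = 1"
    "\<And>y. y \<in> S \<Longrightarrow> y \<bullet> (M *v y) \<le> (x \<bullet> (M *v x)) * (y \<bullet> y)"
proof -
  let ?K = "S \<inter> sphere 0 1"
  let ?q = "\<lambda>x. x \<bullet> (M *v x)"
  have unit_in_K: "y /\<^sub>R norm y \<in> ?K" if "y \<in> S" "y \<noteq> 0" for y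
    using that assms(1) by (simp add: subspace_scale)
  obtain y where "y \<in> S" "y \<noteq> 0"
    using assms subspace_0 by blast
  then have ne: "?K \<noteq> {}"
    using unit_in_K by blast
  have compact: "compact ?K"
    by (intro closed_Int_compact closed_subspace assms(1) compact_sphere)
  have cont: "continuous_on ?K ?q"
    by (intro continuous_on_inner continuous_on_id linear_continuous_on matrix_vector_mul_bounded_linear)
  obtain x where x: "x \<in> ?K" and max: "\<And>z. z \<in> ?K \<Longrightarrow> ?q z \<le> ?q x"
    using continuous_attains_sup[OF compact ne cont] by blast
  have bound: "?q y \<le> ?q x * (y \<bullet> y)" if "y \<in> S" for y
  proof (cases "y = 0")
    case False
    have "?q (y /\<^sub>R norm y) = ?q y / (y \<bullet> y)"
      by (simp add: matrix_vector_mult_scaleR dot_square_norm power2_eq_square field_simps)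
    moreover have "0 < y \<bullet> y"
      using False by simp
    ultimately show ?thesis
      using max[OF unit_in_K[OF that False]] by (simp add: pos_divide_le_eq)
  qed simp
  show ?thesis
    by (rule that[of x]) (use x bound in auto)
qed

lemma symmetric_quadratic_form_add:
  assumes "symmetric_mat M"
  shows "(x + e *\<^sub>R z) \<bullet> (M *v (x + e *\<^sub>R z))
    = x \<bullet> (M *v x) + 2 * e * (z \<bullet> (M *v x)) + e\<^sup>2 * (z \<bullet> (M *v z))"
proof -
  have "x \<bullet> (M *v z) = z \<bullet> (M *v x)"
    using symmetric_mat_inner[OF assms, of z x] by (simp add: inner_commute)
  then show ?thesis
    by (simp add: matrix_vector_right_distrib matrix_vector_mult_scaleR
        inner_add_left inner_add_right power2_eq_square algebra_simps)
qed

text \<open>First-order optimality of the Rayleigh quotient at \<open>x\<close> in every direction \<open>z \<in> S\<close>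
  makes \<open>M x - (x \<bullet> M x) x\<close> orthogonal to \<open>S\<close>, which contains it.\<close>
lemma rayleigh_maximizer_is_eigenvector:
  fixes M :: "real^'n^'n"
  assumes sym: "symmetric_mat M" and S: "subspace S" and inv: "\<And>y. y \<in> S \<Longrightarrow> M *v y \<in> S"
    and x: "x \<in> S" "norm x = 1"
    and max: "\<And>y. y \<in> S \<Longrightarrow> y \<bullet> (M *v y) \<le> (x \<bullet> (M *v x)) * (y \<bullet> y)"
  shows "M *v x = (x \<bullet> (M *v x)) *\<^sub>R x"
proof -
  define \<mu> where "\<mu> = x \<bullet> (M *v x)"
  have orth: "z \<bullet> (M *v x - \<mu> *\<^sub>R x) = 0" if "z \<in> S" for z
  proof -
    have "0 \<le> 2 * e * (\<mu> * (x \<bullet> z) - z \<bullet> (M *v x)) + e\<^sup>2 * (\<mu> * (z \<bullet> z) - z \<bullet> (M *v z))" for e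
    proof -
      have "x + e *\<^sub>R z \<in> S"
        using x(1) that S by (simp add: subspace_add subspace_scale)
      from max[OF this] have le: "(x + e *\<^sub>R z) \<bullet> (M *v (x + e *\<^sub>R z))
          \<le> \<mu> * ((x + e *\<^sub>R z) \<bullet> (x + e *\<^sub>R z))"
        by (simp add: \<mu>_def)
      have q: "(x + e *\<^sub>R z) \<bullet> (M *v (x + e *\<^sub>R z))
          = \<mu> + 2 * e * (z \<bullet> (M *v x)) + e\<^sup>2 * (z \<bullet> (M *v z))"
        unfolding \<mu>_def by (rule symmetric_quadratic_form_add[OF sym])
      have n: "(x + e *\<^sub>R z) \<bullet> (x + e *\<^sub>R z) = 1 + 2 * e * (x \<bullet> z) + e\<^sup>2 * (z \<bullet> z)"
        using x(2) by (simp add: inner_add_left inner_add_right inner_commute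
            power2_eq_square algebra_simps flip: norm_eq_1)
      from le show ?thesis
        unfolding q n by (simp add: algebra_simps)
    qed
    moreover have "0 \<le> \<mu> * (z \<bullet> z) - z \<bullet> (M *v z)"
      using max[OF that] by (simp add: \<mu>_def)
    ultimately have "\<mu> * (x \<bullet> z) - z \<bullet> (M *v x) = 0"
      by (rule linear_coeff_zero_if_quadratic_nonneg)
    then show ?thesis
      by (simp add: inner_diff_right inner_commute)
  qed
  have "M *v x - \<mu> *\<^sub>R x \<in> S"
    using inv[OF x(1)] x(1) S by (simp add: subspace_diff subspace_scale)
  from orth[OF this] show ?thesis
    by (simp add: \<mu>_def)
qed

lemma symmetric_mat_eigenvectors_orthogonal_invariant:
  assumes sym: "symmetric_mat M" and eig: "\<And>u. u \<in> U \<Longrightarrow> M *v u = c u *\<^sub>R u"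
    and y: "\<forall>u\<in>U. orthogonal u y"
  shows "\<forall>u\<in>U. orthogonal u (M *v y)"
proof
  fix u assume "u \<in> U"
  have "u \<bullet> (M *v y) = (M *v u) \<bullet> y"
    by (simp add: symmetric_mat_inner[OF sym])
  also have "\<dots> = 0"
    using eig[OF \<open>u \<in> U\<close>] y \<open>u \<in> U\<close> by (simp add: orthogonal_def)
  finally show "orthogonal u (M *v y)"
    by (simp add: orthogonal_def)
qed

lemma invariant_subspace_rayleigh_max_eigenvector:
  fixes M :: "real^'n^'n"
  assumes sym: "symmetric_mat M" and S: "subspace S" and inv: "\<And>y. y \<in> S \<Longrightarrow> M *v y \<in> S"
    and "S \<noteq> {0}"
  obtains x where "x \<in> S" "norm x = 1" "M *v x = (x \<bullet> (M *v x)) *\<^sub>R x"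
    "\<And>y. y \<in> S \<Longrightarrow> y \<bullet> (M *v y) \<le> (x \<bullet> (M *v x)) * (y \<bullet> y)"
proof -
  obtain x where x: "x \<in> S" "norm x = 1"
    and max: "\<And>y. y \<in> S \<Longrightarrow> y \<bullet> (M *v y) \<le> (x \<bullet> (M *v x)) * (y \<bullet> y)"
    using rayleigh_quotient_attains_max[OF S \<open>S \<noteq> {0}\<close>] by blast
  with rayleigh_maximizer_is_eigenvector[OF sym S inv x max] show ?thesis
    using that by blast
qed

definition orthonormal_basis :: "(real^'n) set \<Rightarrow> bool" where
  "orthonormal_basis U \<longleftrightarrow> pairwise orthogonal U \<and> (\<forall>u\<in>U. norm u = 1)
     \<and> (\<forall>x. (\<forall>u\<in>U. x \<bullet> u = 0) \<longrightarrow> x = 0)"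

lemma orthonormal_basis_finite: "orthonormal_basis U \<Longrightarrow> finite U"
  unfolding orthonormal_basis_def using pairwise_orthogonal_imp_finite by blast

lemma orthonormal_basis_inner:
  assumes "orthonormal_basis U" "u \<in> U" "u' \<in> U"
  shows "u \<bullet> u' = (if u = u' then 1 else 0)"
  using assms unfolding orthonormal_basis_def pairwise_def orthogonal_def
  by (auto simp: dot_square_norm)

lemma orthonormal_basis_expansion:
  assumes U: "orthonormal_basis U"
  shows "x = (\<Sum>u\<in>U. (x \<bullet> u) *\<^sub>R u)"
proof -
  have "(x - (\<Sum>u\<in>U. (x \<bullet> u) *\<^sub>R u)) \<bullet> u' = 0" if "u' \<in> U" for u'
    using that orthonormal_basis_finite[OF U]
    by (simp add: inner_diff_left inner_sum_left orthonormal_basis_inner[OF U _ that]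
        if_distrib cong: if_cong)
  with U have "x - (\<Sum>u\<in>U. (x \<bullet> u) *\<^sub>R u) = 0"
    unfolding orthonormal_basis_def by blast
  then show ?thesis
    by simp
qed

lemma orthonormal_basis_parseval:
  assumes "orthonormal_basis U"
  shows "x \<bullet> y = (\<Sum>u\<in>U. (x \<bullet> u) * (u \<bullet> y))"
  by (subst orthonormal_basis_expansion[OF assms, of x]) (simp add: inner_sum_left)

lemma trace_mult_eq_sum: "trace (X ** Y) = (\<Sum>i\<in>UNIV. \<Sum>j\<in>UNIV. X $ i $ j * Y $ j $ i)"
  by (simp add: trace_def matrix_matrix_mult_def)

lemma trace_mult_add_left: "trace ((A + B) ** X) = trace (A ** X) + trace (B ** X)"
  by (simp add: trace_mult_eq_sum sum.distrib distrib_right)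

lemma inner_mult_eq_sum: "x \<bullet> (X *v y) = (\<Sum>i\<in>UNIV. \<Sum>j\<in>UNIV. X $ i $ j * (x $ i * y $ j))"
  by (simp add: inner_vec_def matrix_vector_mult_def sum_distrib_left mult_ac)

lemma orthonormal_basis_trace:
  fixes U :: "(real^'n) set" and X :: "real^'n^'n"
  assumes U: "orthonormal_basis U"
  shows "trace X = (\<Sum>u\<in>U. u \<bullet> (X *v u))"
proof -
  have coord: "(\<Sum>u\<in>U. u $ i * u $ j) = (if i = j then 1 else 0)" for i j
  proof -
    have "(axis i 1 :: real^'n) \<bullet> axis j 1 = (if i = j then 1 else 0)"
      by (simp add: inner_axis_axis)
    then show ?thesis
      using orthonormal_basis_parseval[OF U, of "axis i 1" "axis j 1"]
      by (simp add: inner_axis inner_axis' del: inner_axis_axis)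
  qed
  have "(\<Sum>u\<in>U. u \<bullet> (X *v u)) = (\<Sum>i\<in>UNIV. \<Sum>j\<in>UNIV. X $ i $ j * (\<Sum>u\<in>U. u $ i * u $ j))"
    by (simp add: inner_mult_eq_sum sum_distrib_left sum.swap[of _ U])
  also have "\<dots> = trace X"
    by (simp add: coord trace_def if_distrib cong: if_cong)
  finally show ?thesis ..
qed

theorem symmetric_mat_orthonormal_eigenbasis:
  fixes M :: "real^'n^'n"
  assumes sym: "symmetric_mat M"
  obtains U where "orthonormal_basis U" "\<And>u. u \<in> U \<Longrightarrow> M *v u = (u \<bullet> (M *v u)) *\<^sub>R u"
proof -
  define P where "P U \<longleftrightarrow> pairwise orthogonal U \<and> (\<forall>u\<in>U. norm u = 1 \<and> M *v u = (u \<bullet> (M *v u)) *\<^sub>R u)"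
    for U :: "(real^'n) set"
  have "card U < Suc DIM(real^'n)" if "P U" for U
  proof -
    have "independent U"
      using that unfolding P_def by (intro pairwise_orthogonal_independent) auto
    then show ?thesis
      using independent_bound[of U] by (simp add: less_Suc_eq_le)
  qed
  moreover have "P {}"
    by (simp add: P_def)
  ultimately obtain U where U: "P U" and U_max: "\<And>U'. P U' \<Longrightarrow> card U' \<le> card U"
    using Lattices_Big.ex_has_greatest_nat[of P "{}" card] by blast
  have "x = 0" if x: "\<forall>u\<in>U. x \<bullet> u = 0" for x
  proof (rule ccontr)
    assume "x \<noteq> 0"
    define S where "S = {y. \<forall>u\<in>U. orthogonal u y}"
    have S: "subspace S"
      unfolding S_def by (rule subspace_orthogonal_to_vectors)
    have inv: "M *v y \<in> S" if "y \<in> S" for y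
      using symmetric_mat_eigenvectors_orthogonal_invariant[OF sym, of U "\<lambda>u. u \<bullet> (M *v u)" y] U that
      unfolding P_def S_def by auto
    have "x \<in> S" "S \<noteq> {0}"
      using x \<open>x \<noteq> 0\<close> by (auto simp: S_def orthogonal_def inner_commute)
    then obtain x0 where x0: "x0 \<in> S" "norm x0 = 1" "M *v x0 = (x0 \<bullet> (M *v x0)) *\<^sub>R x0"
      using invariant_subspace_rayleigh_max_eigenvector[OF sym S inv] by blast
    have "orthogonal x0 u \<and> orthogonal u x0" if "u \<in> U" for u
      using x0(1) that unfolding S_def by (simp add: orthogonal_commute)
    then have "P (insert x0 U)"
      using U x0(2,3) unfolding P_def pairwise_insert by blast
    moreover have "x0 \<notin> U"
      using x0 by (auto simp: S_def orthogonal_def)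
    moreover have "finite U"
      using U unfolding P_def by (simp add: pairwise_orthogonal_imp_finite)
    ultimately show False
      using U_max[of "insert x0 U"] by simp
  qed
  with U that show ?thesis
    unfolding P_def orthonormal_basis_def by blast
qed

section \<open>The two largest eigenvalues\<close>

lemma finite_eigenvalues:
  fixes M :: "real^'n^'n"
  assumes sym: "symmetric_mat M"
  shows "finite {\<mu>. is_eigenvalue M \<mu>}"
proof -
  obtain U where U: "orthonormal_basis U" and eig: "\<And>u. u \<in> U \<Longrightarrow> M *v u = (u \<bullet> (M *v u)) *\<^sub>R u"
    using symmetric_mat_orthonormal_eigenbasis[OF sym] by blast
  have "{\<mu>. is_eigenvalue M \<mu>} \<subseteq> (\<lambda>u. u \<bullet> (M *v u)) ` U"
  proof
    fix \<mu> assume "\<mu> \<in> {\<mu>. is_eigenvalue M \<mu>}"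
    then obtain x where "x \<noteq> 0" and x: "M *v x = \<mu> *\<^sub>R x"
      by (auto simp: is_eigenvalue_def)
    then obtain u where u: "u \<in> U" "x \<bullet> u \<noteq> 0"
      using U unfolding orthonormal_basis_def by blast
    have "\<mu> * (x \<bullet> u) = (M *v x) \<bullet> u"
      by (simp add: x)
    also have "\<dots> = x \<bullet> (M *v u)"
      by (rule symmetric_mat_inner[OF sym])
    also have "\<dots> = (u \<bullet> (M *v u)) * (x \<bullet> u)"
      by (subst eig[OF u(1)]) simp
    finally show "\<mu> \<in> (\<lambda>u. u \<bullet> (M *v u)) ` U"
      using u by auto
  qed
  then show ?thesis
    using orthonormal_basis_finite[OF U] finite_surj by blast
qed

lemma eigenvalue_le_lambda1:
  assumes "symmetric_mat M" "is_eigenvalue M \<mu>"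
  shows "\<mu> \<le> lambda1 M"
  unfolding lambda1_def using finite_eigenvalues[OF assms(1)] assms(2) by simp

lemma eigenvalue_le_lambda2:
  assumes "symmetric_mat M" "is_eigenvalue M \<mu>" "\<mu> < lambda1 M"
  shows "\<mu> \<le> lambda2 M"
  unfolding lambda2_def using finite_eigenvalues[OF assms(1)] assms(2,3) by simp

lemma two_le_eig_mult:
  assumes "M *v x = \<mu> *\<^sub>R x" "M *v y = \<mu> *\<^sub>R y" "x \<noteq> 0" "y \<noteq> 0" "x \<bullet> y = 0"
  shows "2 \<le> eig_mult M \<mu>"
proof -
  have "independent {x, y}"
    using assms(3-5)
    by (intro pairwise_orthogonal_independent) (auto simp: pairwise_insert orthogonal_def inner_commute)
  then have "card {x, y} \<le> eig_mult M \<mu>"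
    unfolding eig_mult_def by (intro independent_card_le_dim) (use assms(1,2) in auto)
  moreover have "x \<noteq> y"
    using assms(3,5) by auto
  ultimately show ?thesis
    by simp
qed

text \<open>The top eigenvalue of \<open>G\<close> restricted to the invariant subspace \<open>v\<^sup>\<perp>\<close> is an
  eigenvalue of \<open>G\<close>; it differs from \<open>lambda1 G\<close> because that eigenvalue is simple.\<close>
lemma rayleigh_le_lambda2:
  fixes G :: "real^'n^'n"
  assumes sym: "symmetric_mat G" and "v \<noteq> 0" and v: "G *v v = lambda1 G *\<^sub>R v"
    and gap: "lambda2 G < lambda1 G" and y: "y \<bullet> v = 0"
  shows "y \<bullet> (G *v y) \<le> lambda2 G * (y \<bullet> y)"
proof (cases "y = 0")
  case False
  define S where "S = {y. orthogonal v y}"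
  have S: "subspace S"
    unfolding S_def by (rule subspace_orthogonal_to_vector)
  have inv: "G *v z \<in> S" if "z \<in> S" for z
    using symmetric_mat_eigenvectors_orthogonal_invariant[OF sym, of "{v}" "\<lambda>_. lambda1 G" z] v that
    unfolding S_def by simp
  have "y \<in> S"
    using y by (simp add: S_def orthogonal_def inner_commute)
  with False have "S \<noteq> {0}"
    by blast
  then obtain x where x: "x \<in> S" "norm x = 1" and eig_x: "G *v x = (x \<bullet> (G *v x)) *\<^sub>R x"
    and max: "\<And>z. z \<in> S \<Longrightarrow> z \<bullet> (G *v z) \<le> (x \<bullet> (G *v x)) * (z \<bullet> z)"
    using invariant_subspace_rayleigh_max_eigenvector[OF sym S inv] by blast
  define \<mu> where "\<mu> = x \<bullet> (G *v x)"
  have eig: "G *v x = \<mu> *\<^sub>R x"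
    unfolding \<mu>_def by (rule eig_x)
  have "x \<noteq> 0"
    using x(2) by auto
  then have ev: "is_eigenvalue G \<mu>"
    unfolding is_eigenvalue_def using eig by blast
  have "\<mu> \<noteq> lambda1 G"
  proof
    assume "\<mu> = lambda1 G"
    then have "2 \<le> eig_mult G (lambda1 G)"
      using two_le_eig_mult[of G v _ x] v eig \<open>v \<noteq> 0\<close> \<open>x \<noteq> 0\<close> x(1)
      by (simp add: S_def orthogonal_def)
    then show False
      using gap by (simp add: lambda2_def)
  qed
  then have "\<mu> \<le> lambda2 G"
    using eigenvalue_le_lambda1[OF sym ev] eigenvalue_le_lambda2[OF sym ev] by simp
  moreover have "y \<bullet> (G *v y) \<le> \<mu> * (y \<bullet> y)"
    unfolding \<mu>_def using max[OF \<open>y \<in> S\<close>] .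
  ultimately show ?thesis
    by (meson inner_ge_zero mult_right_mono order_trans)
qed simp

section \<open>Positive semidefinite matrices\<close>

lemma trace_mult_eigenbasis:
  fixes X W :: "real^'n^'n"
  assumes U: "orthonormal_basis U" and W: "\<And>u. u \<in> U \<Longrightarrow> W *v u = w u *\<^sub>R u"
  shows "trace (X ** W) = (\<Sum>u\<in>U. w u * (u \<bullet> (X *v u)))"
  unfolding orthonormal_basis_trace[OF U, of "X ** W"]
  by (rule sum.cong) (simp_all flip: matrix_vector_mul_assoc add: W matrix_vector_mult_scaleR)

lemma quadratic_form_eigenbasis:
  fixes W :: "real^'n^'n"
  assumes U: "orthonormal_basis U" and W: "\<And>u. u \<in> U \<Longrightarrow> W *v u = w u *\<^sub>R u"
  shows "y \<bullet> (W *v y) = (\<Sum>u\<in>U. w u * (u \<bullet> y)\<^sup>2)"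
proof -
  have "W *v y = W *v (\<Sum>u\<in>U. (y \<bullet> u) *\<^sub>R u)"
    by (metis orthonormal_basis_expansion[OF U])
  also have "\<dots> = (\<Sum>u\<in>U. (y \<bullet> u) *\<^sub>R (w u *\<^sub>R u))"
    by (simp add: linear_sum[OF matrix_vector_mul_linear] o_def matrix_vector_mult_scaleR W
        cong: sum.cong)
  finally show ?thesis
    by (simp add: inner_sum_right power2_eq_square inner_commute mult_ac)
qed

lemma psd_eigenbasis:
  fixes W :: "real^'n^'n"
  assumes "psd W"
  obtains U w where "orthonormal_basis U" "\<And>u. u \<in> U \<Longrightarrow> W *v u = w u *\<^sub>R u"
    "\<And>u. 0 \<le> w u"
proof -
  obtain U where "orthonormal_basis U" "\<And>u. u \<in> U \<Longrightarrow> W *v u = (u \<bullet> (W *v u)) *\<^sub>R u"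
    using assms symmetric_mat_orthonormal_eigenbasis unfolding psd_def by blast
  moreover have "\<And>u. 0 \<le> u \<bullet> (W *v u)"
    using assms unfolding psd_def by blast
  ultimately show ?thesis
    by (rule that[of U "\<lambda>u. u \<bullet> (W *v u)"])
qed

lemma frob_norm_sq: "(frob_norm M)\<^sup>2 = (\<Sum>i\<in>UNIV. \<Sum>j\<in>UNIV. (M $ i $ j)\<^sup>2)"
  unfolding frob_norm_def by (simp add: sum_nonneg)

lemma frob_norm_nonneg: "0 \<le> frob_norm M"
  unfolding frob_norm_def by (simp add: sum_nonneg)

lemma frob_norm_le_trace:
  fixes W :: "real^'n^'n"
  assumes "psd W"
  shows "frob_norm W \<le> trace W"
proof -
  obtain U w where U: "orthonormal_basis U" and W: "\<And>u. u \<in> U \<Longrightarrow> W *v u = w u *\<^sub>R u"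
    and w: "\<And>u. 0 \<le> w u"
    using psd_eigenbasis[OF assms] by blast
  have unit: "u \<bullet> u = 1" if "u \<in> U" for u
    using orthonormal_basis_inner[OF U that that] by simp
  have trace: "trace W = (\<Sum>u\<in>U. w u)"
    using trace_mult_eigenbasis[OF U W, of "mat 1"] unit by (simp cong: sum.cong)
  have W_sym: "W $ j $ i = W $ i $ j" for i j
    using assms unfolding psd_def symmetric_mat_def by (metis transpose_def vec_lambda_beta)
  have "(frob_norm W)\<^sup>2 = (\<Sum>i\<in>UNIV. \<Sum>j\<in>UNIV. W $ i $ j * W $ j $ i)"
    unfolding frob_norm_sq by (intro sum.cong refl) (metis W_sym power2_eq_square)
  also have "\<dots> = trace (W ** W)"
    by (simp add: trace_mult_eq_sum)
  also have "\<dots> = (\<Sum>u\<in>U. w u * w u)"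
    using trace_mult_eigenbasis[OF U W, of W] unit by (simp add: W cong: sum.cong)
  also have "\<dots> \<le> (\<Sum>u\<in>U. w u * trace W)"
  proof (rule sum_mono)
    fix u assume "u \<in> U"
    then have "w u \<le> trace W"
      unfolding trace using orthonormal_basis_finite[OF U] w by (intro member_le_sum) auto
    then show "w u * w u \<le> w u * trace W"
      using w[of u] by (rule mult_left_mono)
  qed
  also have "\<dots> = (trace W)\<^sup>2"
    by (simp add: power2_eq_square trace sum_distrib_right)
  finally have "(frob_norm W)\<^sup>2 \<le> (trace W)\<^sup>2" .
  moreover have "0 \<le> trace W"
    unfolding trace by (simp add: w sum_nonneg)
  ultimately show ?thesis
    by (rule power2_le_imp_le)
qed

lemma rayleigh_le_split:
  fixes G :: "real^'n^'n"
  assumes sym: "symmetric_mat G" and v: "v \<bullet> v = 1" "G *v v = l1 *\<^sub>R v"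
    and l2: "\<And>y. y \<bullet> v = 0 \<Longrightarrow> y \<bullet> (G *v y) \<le> l2 * (y \<bullet> y)"
    and u: "u \<bullet> u = 1"
  shows "u \<bullet> (G *v u) \<le> l1 * (u \<bullet> v)\<^sup>2 + l2 * (1 - (u \<bullet> v)\<^sup>2)"
proof -
  define \<alpha> where "\<alpha> = u \<bullet> v"
  define y where "y = u - \<alpha> *\<^sub>R v"
  have yv: "y \<bullet> v = 0"
    using v(1) by (simp add: y_def \<alpha>_def inner_diff_left)
  have u_eq: "u = y + \<alpha> *\<^sub>R v"
    by (simp add: y_def)
  have "v \<bullet> (G *v y) = 0"
    using yv by (simp flip: symmetric_mat_inner[OF sym] add: v(2) inner_commute)
  then have uGu: "u \<bullet> (G *v u) = y \<bullet> (G *v y) + l1 * \<alpha>\<^sup>2"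
    unfolding u_eq using yv v
    by (simp add: matrix_vector_right_distrib matrix_vector_mult_scaleR inner_add_left
        inner_add_right power2_eq_square algebra_simps)
  have "y \<bullet> y = 1 - \<alpha>\<^sup>2"
    using u yv v(1) unfolding u_eq
    by (simp add: inner_add_left inner_add_right inner_commute power2_eq_square algebra_simps)
  with l2[OF yv] have "y \<bullet> (G *v y) \<le> l2 * (1 - \<alpha>\<^sup>2)"
    by simp
  with uGu show ?thesis
    unfolding \<alpha>_def by linarith
qed

lemma trace_mult_psd_le:
  fixes G W :: "real^'n^'n"
  assumes sym: "symmetric_mat G" and v: "v \<bullet> v = 1" "G *v v = l1 *\<^sub>R v"
    and l2: "\<And>y. y \<bullet> v = 0 \<Longrightarrow> y \<bullet> (G *v y) \<le> l2 * (y \<bullet> y)"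
    and "psd W"
  shows "trace (G ** W) \<le> l1 * (v \<bullet> (W *v v)) + l2 * (trace W - v \<bullet> (W *v v))"
proof -
  obtain U w where U: "orthonormal_basis U" and W: "\<And>u. u \<in> U \<Longrightarrow> W *v u = w u *\<^sub>R u"
    and w: "\<And>u. 0 \<le> w u"
    using psd_eigenbasis[OF \<open>psd W\<close>] by blast
  have unit: "u \<bullet> u = 1" if "u \<in> U" for u
    using orthonormal_basis_inner[OF U that that] by simp
  have "trace (G ** W) = (\<Sum>u\<in>U. w u * (u \<bullet> (G *v u)))"
    by (rule trace_mult_eigenbasis[OF U W])
  also have "\<dots> \<le> (\<Sum>u\<in>U. w u * (l1 * (u \<bullet> v)\<^sup>2 + l2 * (1 - (u \<bullet> v)\<^sup>2)))"
    using rayleigh_le_split[OF sym v l2 unit] w by (intro sum_mono mult_left_mono)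
  also have "\<dots> = l1 * (\<Sum>u\<in>U. w u * (u \<bullet> v)\<^sup>2)
      + l2 * ((\<Sum>u\<in>U. w u) - (\<Sum>u\<in>U. w u * (u \<bullet> v)\<^sup>2))"
    by (simp add: algebra_simps sum.distrib sum_distrib_left sum_subtractf)
  also have "\<dots> = l1 * (v \<bullet> (W *v v)) + l2 * (trace W - v \<bullet> (W *v v))"
    using quadratic_form_eigenbasis[OF U W, of v] trace_mult_eigenbasis[OF U W, of "mat 1"] unit
    by (simp add: inner_commute cong: sum.cong)
  finally show ?thesis .
qed

lemma frob_norm_diff_outer_sq:
  "(frob_norm (W - outer v))\<^sup>2 = (frob_norm W)\<^sup>2 - 2 * (v \<bullet> (W *v v)) + (v \<bullet> v)\<^sup>2"
proof -
  have "(v \<bullet> v)\<^sup>2 = (\<Sum>i\<in>UNIV. \<Sum>j\<in>UNIV. (v $ i * v $ j)\<^sup>2)"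
    by (simp add: inner_vec_def power2_eq_square sum_product mult_ac)
  then show ?thesis
    unfolding frob_norm_sq inner_mult_eq_sum
    by (simp add: outer_def power2_diff sum.distrib sum_subtractf sum_distrib_left mult_ac)
qed

text \<open>Uses \<open>\<parallel>W\<parallel>\<^sub>F \<le> tr W = 1\<close>, so that \<open>\<parallel>W - v v\<^sup>T\<parallel>\<^sub>F\<^sup>2 \<le> 2 (1 - v\<^sup>T W v)\<close>.\<close>
lemma gap_frob_dist_outer_le:
  fixes G W :: "real^'n^'n"
  assumes sym: "symmetric_mat G" and v: "v \<bullet> v = 1" "G *v v = l1 *\<^sub>R v"
    and l2: "\<And>y. y \<bullet> v = 0 \<Longrightarrow> y \<bullet> (G *v y) \<le> l2 * (y \<bullet> y)" and "l2 \<le> l1"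
    and W: "psd W" "trace W = 1"
  shows "(l1 - l2) * (frob_norm (W - outer v))\<^sup>2 \<le> 2 * (l1 - trace (G ** W))"
proof -
  define c where "c = v \<bullet> (W *v v)"
  have "frob_norm W \<le> 1"
    using frob_norm_le_trace[OF W(1)] W(2) by simp
  then have "(frob_norm W)\<^sup>2 \<le> 1"
    by (simp add: frob_norm_nonneg power_le_one)
  then have "(frob_norm (W - outer v))\<^sup>2 \<le> 2 * (1 - c)"
    unfolding frob_norm_diff_outer_sq c_def v(1) by simp
  then have "(l1 - l2) * (frob_norm (W - outer v))\<^sup>2 \<le> (l1 - l2) * (2 * (1 - c))"
    using \<open>l2 \<le> l1\<close> by (intro mult_left_mono) auto
  also have "\<dots> = 2 * ((l1 - l2) * (1 - c))"
    by simp
  also have "(l1 - l2) * (1 - c) \<le> l1 - trace (G ** W)"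
    using trace_mult_psd_le[OF sym v l2 W(1)] W(2) unfolding c_def by (simp add: algebra_simps)
  finally show ?thesis
    by simp
qed

section \<open>Sparsity and the perturbation\<close>

definition entrywise_l1 :: "real^'m^'n \<Rightarrow> real" where
  "entrywise_l1 M = (\<Sum>i\<in>UNIV. \<Sum>j\<in>UNIV. \<bar>M $ i $ j\<bar>)"

lemma sdp_feasible_iff:
  "sdp_feasible k W \<longleftrightarrow> trace W = 1 \<and> entrywise_l1 W \<le> real k \<and> psd W"
  by (simp add: sdp_feasible_def entrywise_l1_def)

lemma sparse_l1_sq_le:
  fixes v :: "real^'n"
  assumes "k_sparse k v"
  shows "(\<Sum>i\<in>UNIV. \<bar>v $ i\<bar>)\<^sup>2 \<le> real k * (v \<bullet> v)"
proof -
  let ?S = "{i. v $ i \<noteq> 0}"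
  have "(\<Sum>i\<in>UNIV. \<bar>v $ i\<bar>)\<^sup>2 = (\<Sum>i\<in>?S. 1 * \<bar>v $ i\<bar>)\<^sup>2"
    by (simp add: sum.mono_neutral_right)
  also have "\<dots> \<le> (\<Sum>i\<in>?S. 1\<^sup>2) * (\<Sum>i\<in>?S. \<bar>v $ i\<bar>\<^sup>2)"
    by (rule Cauchy_Schwarz_ineq_sum)
  also have "\<dots> = real (card ?S) * (v \<bullet> v)"
    by (simp add: inner_vec_def power2_eq_square sum.mono_neutral_left)
  also have "\<dots> \<le> real k * (v \<bullet> v)"
    using assms by (intro mult_right_mono) (simp_all add: k_sparse_def)
  finally show ?thesis .
qed

lemma outer_mult_vec: "outer v *v x = (v \<bullet> x) *\<^sub>R v"
  by (simp add: vec_eq_iff outer_def matrix_vector_mult_def inner_vec_def sum_distrib_left mult_ac)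

lemma psd_outer: "psd (outer v)"
proof -
  have "transpose (outer v) = outer v"
    by (simp add: vec_eq_iff transpose_def outer_def mult.commute)
  moreover have "0 \<le> x \<bullet> (outer v *v x)" for x
    by (simp add: outer_mult_vec inner_commute)
  ultimately show ?thesis
    by (simp add: psd_def symmetric_mat_def)
qed

lemma outer_sdp_feasible:
  assumes "k_sparse k v" "norm v = 1"
  shows "sdp_feasible k (outer v)"
proof -
  have vv: "v \<bullet> v = 1"
    using assms(2) by (simp add: dot_square_norm)
  have "trace (outer v) = 1"
    using vv by (simp add: trace_def outer_def inner_vec_def)
  moreover have "entrywise_l1 (outer v) \<le> real k"
    using sparse_l1_sq_le[OF assms(1)] vv
    by (simp add: entrywise_l1_def outer_def abs_mult power2_eq_square sum_product)
  ultimately show ?thesis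
    by (simp add: sdp_feasible_iff psd_outer)
qed

lemma trace_mult_outer: "trace (M ** outer v) = v \<bullet> (M *v v)"
  by (simp add: trace_mult_eq_sum inner_mult_eq_sum outer_def mult_ac)

lemma trace_mult_diff_le:
  fixes E W V :: "real^'n^'n"
  assumes "\<forall>i j. \<bar>E $ i $ j\<bar> \<le> a"
  shows "trace (E ** W) - trace (E ** V) \<le> a * entrywise_l1 (W - V)"
proof -
  have "trace (E ** W) - trace (E ** V) = (\<Sum>i\<in>UNIV. \<Sum>j\<in>UNIV. E $ i $ j * (W - V) $ j $ i)"
    by (simp add: trace_mult_eq_sum sum_subtractf right_diff_distrib)
  also have "\<dots> \<le> (\<Sum>i\<in>UNIV. \<Sum>j\<in>UNIV. a * \<bar>(W - V) $ j $ i\<bar>)"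
  proof (intro sum_mono)
    fix i j
    have "E $ i $ j * (W - V) $ j $ i \<le> \<bar>E $ i $ j\<bar> * \<bar>(W - V) $ j $ i\<bar>"
      by (metis abs_ge_self abs_mult)
    also have "\<dots> \<le> a * \<bar>(W - V) $ j $ i\<bar>"
      using assms by (intro mult_right_mono) auto
    finally show "E $ i $ j * (W - V) $ j $ i \<le> a * \<bar>(W - V) $ j $ i\<bar>" .
  qed
  also have "\<dots> = a * entrywise_l1 (W - V)"
    unfolding entrywise_l1_def sum_distrib_left by (rule sum.swap)
  finally show ?thesis .
qed

text \<open>On the \<open>k \<times> k\<close> support block of \<open>v v\<^sup>T\<close> the l1 mass is controlled by Cauchy-Schwarz;
  off it the entries are those of \<open>W\<close>.\<close>
lemma entrywise_l1_diff_outer_le: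
  fixes W :: "real^'n^'n"
  assumes "k_sparse k v" and W: "entrywise_l1 W \<le> real k"
  shows "entrywise_l1 (W - outer v) \<le> real k * (1 + frob_norm (W - outer v))"
proof -
  let ?S = "{i. v $ i \<noteq> 0}"
  let ?T = "?S \<times> ?S"
  define h where "h p = \<bar>(W - outer v) $ fst p $ snd p\<bar>" for p
  have pairs: "(\<Sum>i\<in>UNIV. \<Sum>j\<in>UNIV. f i j) = (\<Sum>p\<in>UNIV. f (fst p) (snd p))"
    for f :: "'n \<Rightarrow> 'n \<Rightarrow> real"
    unfolding UNIV_Times_UNIV[symmetric] sum.cartesian_product by (simp add: split_beta)
  have card_S: "card ?S \<le> k"
    using assms(1) by (simp add: k_sparse_def)
  have "(\<Sum>p\<in>UNIV - ?T. h p) = (\<Sum>p\<in>UNIV - ?T. \<bar>W $ fst p $ snd p\<bar>)"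
    by (rule sum.cong) (auto simp: h_def outer_def)
  also have "\<dots> \<le> (\<Sum>p\<in>UNIV. \<bar>W $ fst p $ snd p\<bar>)"
    by (rule sum_mono2) auto
  also have "\<dots> \<le> real k"
    using W unfolding entrywise_l1_def pairs .
  finally have off_block: "(\<Sum>p\<in>UNIV - ?T. h p) \<le> real k" .
  have frob: "(frob_norm (W - outer v))\<^sup>2 = (\<Sum>p\<in>UNIV. (h p)\<^sup>2)"
    unfolding frob_norm_sq pairs h_def by (simp only: power2_abs)
  have "(\<Sum>p\<in>?T. h p)\<^sup>2 = (\<Sum>p\<in>?T. 1 * h p)\<^sup>2"
    by simp
  also have "\<dots> \<le> (\<Sum>p\<in>?T. 1\<^sup>2) * (\<Sum>p\<in>?T. (h p)\<^sup>2)"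
    by (rule Cauchy_Schwarz_ineq_sum)
  also have "\<dots> \<le> (real k)\<^sup>2 * (\<Sum>p\<in>UNIV. (h p)\<^sup>2)"
  proof (rule mult_mono)
    show "(\<Sum>p\<in>?T. (1::real)\<^sup>2) \<le> (real k)\<^sup>2"
      using card_S by (simp add: card_cartesian_product power2_eq_square mult_mono)
    show "(\<Sum>p\<in>?T. (h p)\<^sup>2) \<le> (\<Sum>p\<in>UNIV. (h p)\<^sup>2)"
      by (rule sum_mono2) auto
  qed (simp_all add: sum_nonneg)
  also have "\<dots> = (real k * frob_norm (W - outer v))\<^sup>2"
    by (simp add: power_mult_distrib frob)
  finally have on_block: "(\<Sum>p\<in>?T. h p) \<le> real k * frob_norm (W - outer v)"
    by (rule power2_le_imp_le) (simp add: frob_norm_nonneg)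
  have "entrywise_l1 (W - outer v) = (\<Sum>p\<in>UNIV. h p)"
    unfolding entrywise_l1_def pairs h_def ..
  also have "\<dots> = (\<Sum>p\<in>UNIV - ?T. h p) + (\<Sum>p\<in>?T. h p)"
    by (rule sum.subset_diff) auto
  finally show ?thesis
    using on_block off_block by (simp add: algebra_simps)
qed

lemma trace_mult_diff_outer_le:
  fixes E W :: "real^'n^'n"
  assumes E: "\<forall>i j. \<bar>E $ i $ j\<bar> \<le> a" and "k_sparse k v" "entrywise_l1 W \<le> real k"
  shows "trace (E ** W) - trace (E ** outer v) \<le> a * (real k * (1 + frob_norm (W - outer v)))"
proof -
  have "0 \<le> a"
    using E by (meson abs_ge_zero order_trans)
  have "trace (E ** W) - trace (E ** outer v) \<le> a * entrywise_l1 (W - outer v)"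
    by (rule trace_mult_diff_le[OF E])
  also have "\<dots> \<le> a * (real k * (1 + frob_norm (W - outer v)))"
    using entrywise_l1_diff_outer_le[OF assms(2,3)] \<open>0 \<le> a\<close> by (rule mult_left_mono)
  finally show ?thesis .
qed

lemma le_add_sqrt_if_sq_le:
  fixes f y :: real
  assumes "0 \<le> y" and sq: "f\<^sup>2 \<le> y * (1 + f)"
  shows "f \<le> y + sqrt y"
proof (rule ccontr)
  assume "\<not> f \<le> y + sqrt y"
  then have gt: "y + sqrt y < f" by simp
  have "sqrt y \<le> f" "0 < f"
    using gt assms(1) real_sqrt_ge_zero[of y] by linarith+
  have "y = sqrt y * sqrt y"
    using assms(1) by simp
  also have "\<dots> \<le> f * sqrt y"
    using \<open>sqrt y \<le> f\<close> by (rule mult_right_mono) (simp add: assms(1))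
  finally have "y \<le> f * sqrt y" .
  moreover have "f * (y + sqrt y) < f * f"
    using gt \<open>0 < f\<close> by (rule mult_strict_left_mono)
  ultimately have "y * (1 + f) < f\<^sup>2"
    by (simp add: power2_eq_square algebra_simps)
  with sq show False by simp
qed

theorem proposition7:
  fixes B :: "real^'d^'n" and E :: "real^'d^'d" and v :: "real^'d"
    and a :: real and k :: nat and Wopt :: "real^'d^'d"
  defines "G \<equiv> transpose B ** B"
  defines "A \<equiv> G + E"
  assumes E_sym: "symmetric_mat E"
    and E_bound: "\<forall>i j. \<bar>E $ i $ j\<bar> \<le> a"
    and v_sparse: "k_sparse k v"
    and v_unit: "norm v = 1"
    and v_eig: "G *v v = lambda1 G *\<^sub>R v"
    and gap: "lambda1 G - lambda2 G > 0"
    and W_feas: "sdp_feasible k Wopt"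
    and W_opt: "\<forall>W. sdp_feasible k W \<longrightarrow> trace (A ** W) \<le> trace (A ** Wopt)"
  shows "frob_norm (Wopt - outer v)
           \<le> 2 * a * real k / (lambda1 G - lambda2 G)
             + sqrt (2 * a * real k / (lambda1 G - lambda2 G))"
proof -
  let ?\<Delta> = "lambda1 G - lambda2 G" and ?f = "frob_norm (Wopt - outer v)"
  have G_sym: "symmetric_mat G"
    unfolding G_def symmetric_mat_def by (simp add: matrix_transpose_mul)
  have vv: "v \<bullet> v = 1" and "v \<noteq> 0"
    using v_unit by (auto simp: dot_square_norm)
  have W: "psd Wopt" "trace Wopt = 1" "entrywise_l1 Wopt \<le> real k"
    using W_feas by (auto simp: sdp_feasible_iff)
  have "?\<Delta> * ?f\<^sup>2 \<le> 2 * (lambda1 G - trace (G ** Wopt))"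
    using gap by (intro gap_frob_dist_outer_le[OF G_sym vv v_eig _ _ W(1,2)]
        rayleigh_le_lambda2[OF G_sym \<open>v \<noteq> 0\<close> v_eig]) auto
  also have "lambda1 G - trace (G ** Wopt) \<le> trace (E ** Wopt) - trace (E ** outer v)"
    using W_opt[rule_format, OF outer_sdp_feasible[OF v_sparse v_unit]]
    unfolding A_def trace_mult_add_left by (simp add: trace_mult_outer v_eig vv)
  also have "\<dots> \<le> a * (real k * (1 + ?f))"
    by (rule trace_mult_diff_outer_le[OF E_bound v_sparse W(3)])
  finally have "?f\<^sup>2 \<le> 2 * a * real k / ?\<Delta> * (1 + ?f)"
    using gap by (simp add: field_simps)
  moreover have "0 \<le> a"
    using E_bound by (meson abs_ge_zero order_trans)
  then have "0 \<le> 2 * a * real k / ?\<Delta>"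
    using gap by simp
  ultimately show ?thesis
    by (rule le_add_sqrt_if_sq_le[rotated])
qed

end
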